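(* Let $k:[0,\infty)\to[0,\infty)$ be of the form $k(x)=\nu((x,\infty))$ for a finite Borel measure $\nu$ on $(0,\infty)$ with $\int_{(2,\infty)}\log x\,\nu(dx)<\infty$ and $k(0)=\nu((0,\infty))=\alpha\in(2,\infty)$, and let $\varphi(t)=\exp\big(\int_0^\infty(e^{itx}-1)\frac{k(x)}{x}dx\big)$. Then there exist a function $L:(1,\infty)\to[0,\infty)$ that is slowly varying at $\infty$ and a constant $B>0$ such that \[ \lim_{|t|\to\infty}\frac{|t|^{\alpha}|\varphi(t)|}{L(|t|)}=B. \]
   Context: A measurable function $U$ on $(1,\infty)$ (or $[0,\infty)$) with values in $[0,\infty)$ is slowly varying at $\infty$ if $\lim_{t\to\infty}U(tx)/U(t)=1$ for every $x>0$. Here $\varphi$ is the characteristic function of the stationary distribution of the Ornstein–Uhlenbeck process $dX_t=-\lambda X_tdt+dJ_{\lambda t}$ driven by a compound Poisson subordinator $J$ with Lévy measure $\nu$. *)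

theory Defs
  imports "HOL-Analysis.Analysis"
begin

definition slowly_varying_at_top :: "(real \<Rightarrow> real) \<Rightarrow> bool" where
  "slowly_varying_at_top U \<longleftrightarrow>
     set_borel_measurable borel {1<..} U \<and>
     (\<forall>t>1. 0 \<le> U t) \<and>
     (\<forall>x>0. ((\<lambda>t. U (t * x) / U t) \<longlongrightarrow> 1) at_top)"

definition tail_fun :: "real measure \<Rightarrow> real \<Rightarrow> real" where
  "tail_fun \<nu> x = measure \<nu> {x<..}"

definition ou_charfun :: "real measure \<Rightarrow> real \<Rightarrow> complex" where
  "ou_charfun \<nu> t = exp (set_lebesgue_integral lborel {0<..}
      (\<lambda>x. (exp (\<i> * complex_of_real (t * x)) - 1) * complex_of_real (tail_fun \<nu> x / x)))"

end

theory Submission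
  imports Defs "HOL-Probability.Characteristic_Functions"
begin

text \<open>Taking real parts in the exponent, \<open>|\<phi>(t)| = exp (-R(t))\<close> with
  \<open>R(t) = \<integral>\<^sub>0\<^sup>\<infinity> (1 - cos tx) k(x)/x dx\<close>, finite thanks to the logarithmic moment of \<open>\<nu>\<close>.
  Since \<open>k(x) = \<nu>((x,\<infinity>))\<close>, Tonelli gives \<open>R(t) = \<integral> J\<^sub>t(y) \<nu>(dy)\<close> with
  \<open>J\<^sub>t(y) = \<integral>\<^sub>0\<^sup>y (1 - cos tx)/x dx\<close>, and the substitution \<open>x \<mapsto> cx\<close> shows
  \<open>J\<^sub>c\<^sub>t(y) = J\<^sub>t(y) + G\<^sub>c(ty)\<close>, where \<open>G\<^sub>c(z) = \<integral>\<^sub>1\<^sup>c (1 - cos zv)/v dv \<rightarrow> ln c\<close> as \<open>z \<rightarrow> \<infinity>\<close>.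
  Because \<open>\<nu>\<close> lives on \<open>(0,\<infinity>)\<close>, dominated convergence yields \<open>R(ct) - R(t) \<rightarrow> \<alpha> ln c\<close>.
  Hence \<open>L(t) = t\<^sup>\<alpha> exp (-R(t)) = t\<^sup>\<alpha> |\<phi>(t)|\<close> is itself slowly varying and the limit holds
  with \<open>B = 1\<close>.\<close>

lemma slowly_varying_at_top_powr_exp:
  fixes R :: "real \<Rightarrow> real"
  assumes [measurable]: "R \<in> borel_measurable borel"
    and R_ratio: "\<And>x. 0 < x \<Longrightarrow> ((\<lambda>t. R (t * x) - R t) \<longlongrightarrow> a * ln x) at_top"
  shows "slowly_varying_at_top (\<lambda>s. s powr a * exp (- R s))"
  unfolding slowly_varying_at_top_def
proof (intro conjI allI impI)
  show "set_borel_measurable borel {1<..} (\<lambda>s. s powr a * exp (- R s))"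
    unfolding set_borel_measurable_def by measurable
next
  fix x :: real assume x: "0 < x"
  have "((\<lambda>t. x powr a * exp (- (R (t * x) - R t))) \<longlongrightarrow> x powr a * exp (- (a * ln x))) at_top"
    using R_ratio[OF x] by (intro tendsto_intros)
  moreover have "x powr a * exp (- (a * ln x)) = 1"
    using x by (simp add: powr_def exp_minus)
  moreover have "\<forall>\<^sub>F t in at_top. x powr a * exp (- (R (t * x) - R t))
      = (t * x) powr a * exp (- R (t * x)) / (t powr a * exp (- R t))"
    using eventually_gt_at_top[of 0]
    by eventually_elim (use x in \<open>simp add: powr_mult exp_diff exp_minus field_simps\<close>)
  ultimately show "((\<lambda>t. (t * x) powr a * exp (- R (t * x)) / (t powr a * exp (- R t))) \<longlongrightarrow> 1) at_top"
    using tendsto_cong by force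
qed simp

lemma norm_iexp_minus_one_le_abs: "cmod (iexp x - 1) \<le> \<bar>x\<bar>"
  using iexp_approx1[of x 0] by simp

lemma norm_iexp_minus_one_le_2: "cmod (iexp x - 1) \<le> 2"
  using norm_triangle_ineq4[of "iexp x" 1] by simp

lemma one_minus_cos_le_norm_iexp: "1 - cos y \<le> cmod (iexp y - 1)"
proof -
  have "1 - cos y = - Re (iexp y - 1)"
    by (simp add: Re_exp)
  also have "\<dots> \<le> cmod (iexp y - 1)"
    using abs_Re_le_cmod[of "iexp y - 1"] by linarith
  finally show ?thesis .
qed

lemma has_integral_inverse_ln:
  fixes c :: real
  assumes "1 \<le> c"
  shows "((\<lambda>v. 1 / v) has_integral ln c) {1..c}"
proof -
  have "((\<lambda>v. 1 / v) has_integral (ln c - ln 1)) {1..c}"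
    using assms by (intro fundamental_theorem_of_calculus)
      (auto intro!: derivative_eq_intros simp: has_real_derivative_iff_has_vector_derivative[symmetric])
  then show ?thesis by simp
qed

lemma nn_integral_inverse_ln:
  fixes c :: real
  assumes "1 \<le> c"
  shows "(\<integral>\<^sup>+v. ennreal (1 / v) * indicator {1..c} v \<partial>lborel) = ennreal (ln c)"
  by (rule nn_integral_has_integral_lebesgue'[OF _ has_integral_inverse_ln[OF assms]]) auto

lemma nn_integral_Ioo_le_ln:
  fixes g :: "real \<Rightarrow> real"
  assumes g: "\<And>x. 0 < x \<Longrightarrow> g x \<le> A \<and> g x \<le> B / x" and "0 \<le> A" "0 \<le> B"
  shows "(\<integral>\<^sup>+x. indicator {0<..<y} x * ennreal (g x) \<partial>lborel) \<le> ennreal (A + B * ln (max 1 y))"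
proof -
  have "(\<integral>\<^sup>+x. indicator {0<..<y} x * ennreal (g x) \<partial>lborel)
     \<le> (\<integral>\<^sup>+x. ennreal A * indicator {0..1} x + ennreal B * (ennreal (1 / x) * indicator {1..max 1 y} x) \<partial>lborel)"
  proof (rule nn_integral_mono)
    fix x :: real
    consider "x \<notin> {0<..<y}" | "x \<in> {0<..<y}" "x \<le> 1" | "x \<in> {0<..<y}" "1 < x"
      by fastforce
    then show "indicator {0<..<y} x * ennreal (g x)
        \<le> ennreal A * indicator {0..1} x + ennreal B * (ennreal (1 / x) * indicator {1..max 1 y} x)"
    proof cases
      case 2
      then have "ennreal (g x) \<le> ennreal A" using g[of x] by (auto intro: ennreal_leI)
      then show ?thesis using 2 by (auto simp: indicator_def intro: add_increasing2)
    next
      case 3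
      then have "ennreal (g x) \<le> ennreal B * ennreal (1 / x)"
        using g[of x] \<open>0 \<le> B\<close> by (subst ennreal_mult[symmetric]) (auto intro!: ennreal_leI)
      then show ?thesis using 3 by (auto simp: indicator_def intro: order_trans[OF _ add_increasing])
    qed simp
  qed
  also have "\<dots> = ennreal A + ennreal B * ennreal (ln (max 1 y))"
    by (simp add: nn_integral_add nn_integral_cmult nn_integral_cmult_indicator nn_integral_inverse_ln)
  also have "\<dots> = ennreal (A + B * ln (max 1 y))"
    using assms(2,3) by (simp add: ennreal_mult)
  finally show ?thesis .
qed

definition cosine_log_integral :: "real \<Rightarrow> real \<Rightarrow> real" where
  "cosine_log_integral c z = integral {1..c} (\<lambda>v. (1 - cos (z * v)) / v)"

lemma has_integral_cosine_log_integral: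
  "((\<lambda>v. (1 - cos (z * v)) / v) has_integral cosine_log_integral c z) {1..c}"
proof -
  have "continuous_on {1..c} (\<lambda>v. (1 - cos (z * v)) / v)"
    by (intro continuous_intros) auto
  then show ?thesis
    unfolding cosine_log_integral_def using integrable_continuous_interval has_integral_integral by blast
qed

lemma cosine_log_integral_nonneg: "0 \<le> cosine_log_integral c z"
  by (rule has_integral_nonneg[OF has_integral_cosine_log_integral]) auto

lemma cosine_log_integral_le:
  assumes "1 \<le> c"
  shows "cosine_log_integral c z \<le> 2 * ln c"
proof (rule has_integral_le[OF has_integral_cosine_log_integral])
  show "((\<lambda>v. 2 * (1 / v)) has_integral 2 * ln c) {1..c}"
    by (intro has_integral_mult_right has_integral_inverse_ln assms)
qed (auto simp: divide_right_mono)

text \<open>Integrating the cosine term by parts, its contribution is \<open>O(1/z)\<close>.\<close>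
lemma cosine_log_integral_approx:
  assumes c: "1 \<le> c" and z: "0 < z"
  shows "\<bar>cosine_log_integral c z - ln c\<bar> \<le> (c + 1) / z"
proof -
  define F where "F v = sin (z * v) / (z * v)" for v
  define s where "s v = sin (z * v) / (z * v\<^sup>2)" for v
  have F_int: "((\<lambda>v. cos (z * v) / v - s v) has_integral (F c - F 1)) {1..c}"
  proof (rule fundamental_theorem_of_calculus)
    fix v assume v: "v \<in> {1..c}"
    have "(F has_real_derivative cos (z * v) / v - s v) (at v within {1..c})"
      unfolding F_def s_def using v z
      by (auto intro!: derivative_eq_intros simp: field_simps power2_eq_square)
    then show "(F has_vector_derivative cos (z * v) / v - s v) (at v within {1..c})"
      by (simp add: has_real_derivative_iff_has_vector_derivative)
  qed (use c in auto)
  have s_cont: "continuous_on {1..c} s"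
    unfolding s_def by (intro continuous_intros) (use z in auto)
  have s_int: "(s has_integral integral {1..c} s) {1..c}"
    using s_cont by (intro integrable_integral integrable_continuous_interval)
  have "((\<lambda>v. 1 / v - (cos (z * v) / v - s v) - s v) has_integral
      (ln c - (F c - F 1) - integral {1..c} s)) {1..c}"
    using has_integral_diff[OF has_integral_diff[OF has_integral_inverse_ln[OF c] F_int] s_int] .
  then have "cosine_log_integral c z = ln c - (F c - F 1) - integral {1..c} s"
    by (intro has_integral_unique[OF has_integral_cosine_log_integral]) (simp add: diff_divide_distrib)
  moreover have F_bound: "\<bar>F v\<bar> \<le> 1 / z" and s_bound: "\<bar>s v\<bar> \<le> 1 / z" if "1 \<le> v" for v
  proof -
    have "\<bar>F v\<bar> \<le> 1 / (z * v)" "\<bar>s v\<bar> \<le> 1 / (z * v\<^sup>2)"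
      unfolding F_def s_def using that z by (auto simp: abs_mult intro!: divide_right_mono)
    moreover have "1 / (z * v) \<le> 1 / z" "1 / (z * v\<^sup>2) \<le> 1 / z"
      using that z by (auto intro!: divide_left_mono)
    ultimately show "\<bar>F v\<bar> \<le> 1 / z" "\<bar>s v\<bar> \<le> 1 / z" by linarith+
  qed
  moreover have "\<bar>integral {1..c} s\<bar> \<le> (c - 1) / z"
    using integral_bound[of 1 c s "1 / z"] c s_cont s_bound by auto
  moreover have "(c + 1) / z = 1 / z + 1 / z + (c - 1) / z"
    using z by (simp add: field_simps)
  moreover note F_bound[of 1] F_bound[of c]
  ultimately show ?thesis
    using c by linarith
qed

lemma tendsto_cosine_log_integral:
  assumes "1 \<le> c"
  shows "(cosine_log_integral c \<longlongrightarrow> ln c) at_top"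
proof -
  have "((\<lambda>z. cosine_log_integral c z - ln c) \<longlongrightarrow> 0) at_top"
  proof (rule Lim_null_comparison)
    show "\<forall>\<^sub>F z in at_top. norm (cosine_log_integral c z - ln c) \<le> (c + 1) / z"
      using eventually_gt_at_top[of 0] by eventually_elim (use cosine_log_integral_approx assms in auto)
    show "((\<lambda>z. (c + 1) / z) \<longlongrightarrow> 0) at_top"
      by (intro tendsto_divide_0[OF tendsto_const] filterlim_at_top_imp_at_infinity[OF filterlim_ident])
  qed
  then show ?thesis by (simp add: LIM_zero_iff)
qed

lemma nn_integral_one_minus_cos_rescale:
  fixes a b :: real and S :: "real set"
  assumes a: "0 < a" and S[measurable]: "S \<in> sets borel"
  shows "(\<integral>\<^sup>+x. indicator S x * ennreal ((1 - cos (b * x)) / x) \<partial>lborel)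
       = (\<integral>\<^sup>+v. indicator S (a * v) * ennreal ((1 - cos (b * a * v)) / v) \<partial>lborel)"
proof -
  have "(\<integral>\<^sup>+x. indicator S x * ennreal ((1 - cos (b * x)) / x) \<partial>lborel)
      = ennreal \<bar>a\<bar> * (\<integral>\<^sup>+v. indicator S (0 + a * v) * ennreal ((1 - cos (b * (0 + a * v))) / (0 + a * v)) \<partial>lborel)"
    by (rule nn_integral_real_affine) (use a in auto)
  also have "\<dots> = (\<integral>\<^sup>+v. ennreal a * (indicator S (a * v) * ennreal ((1 - cos (b * (a * v))) / (a * v))) \<partial>lborel)"
    using a by (simp add: nn_integral_cmult)
  also have "\<dots> = (\<integral>\<^sup>+v. indicator S (a * v) * ennreal ((1 - cos (b * a * v)) / v) \<partial>lborel)"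
  proof (rule nn_integral_cong)
    fix v :: real
    have "ennreal a * ennreal ((1 - cos (b * (a * v))) / (a * v)) = ennreal (a * ((1 - cos (b * (a * v))) / (a * v)))"
      by (rule ennreal_mult'[symmetric]) (use a in simp)
    also have "a * ((1 - cos (b * (a * v))) / (a * v)) = (1 - cos (b * a * v)) / v"
      using a by (cases "v = 0") (auto simp: field_simps mult.assoc)
    finally show "ennreal a * (indicator S (a * v) * ennreal ((1 - cos (b * (a * v))) / (a * v)))
        = indicator S (a * v) * ennreal ((1 - cos (b * a * v)) / v)"
      by (metis mult.left_commute)
  qed
  finally show ?thesis .
qed

lemma nn_integral_cosine_log_integral:
  assumes "1 \<le> c"
  shows "(\<integral>\<^sup>+v. indicator {1..<c} v * ennreal ((1 - cos (z * v)) / v) \<partial>lborel) = ennreal (cosine_log_integral c z)"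
proof -
  have "(\<integral>\<^sup>+v. indicator {1..<c} v * ennreal ((1 - cos (z * v)) / v) \<partial>lborel)
     = (\<integral>\<^sup>+v. ennreal ((1 - cos (z * v)) / v) * indicator {1..c} v \<partial>lborel)"
    using AE_lborel_singleton[of c] by (intro nn_integral_cong_AE) (auto simp: indicator_def)
  also have "\<dots> = ennreal (cosine_log_integral c z)"
    by (rule nn_integral_has_integral_lebesgue'[OF _ has_integral_cosine_log_integral]) auto
  finally show ?thesis .
qed

definition cosine_kernel_integral :: "real \<Rightarrow> real \<Rightarrow> ennreal" where
  "cosine_kernel_integral t y = (\<integral>\<^sup>+x. indicator {0<..<y} x * ennreal ((1 - cos (t * x)) / x) \<partial>lborel)"

lemma cosine_kernel_integral_scale:
  assumes c: "1 \<le> c" and y: "0 < y"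
  shows "cosine_kernel_integral (c * t) y = cosine_kernel_integral t y + ennreal (cosine_log_integral c (t * y))"
proof -
  let ?k = "\<lambda>x. ennreal ((1 - cos (t * x)) / x)"
  have "cosine_kernel_integral (c * t) y = (\<integral>\<^sup>+x. indicator {0<..<c * y} (c * x) * ennreal ((1 - cos (t * c * x)) / x) \<partial>lborel)"
    unfolding cosine_kernel_integral_def using c y
    by (intro nn_integral_cong) (auto simp: indicator_def mult.commute mult.left_commute zero_less_mult_iff)
  also have "\<dots> = (\<integral>\<^sup>+x. indicator {0<..<c * y} x * ?k x \<partial>lborel)"
    using c by (intro nn_integral_one_minus_cos_rescale[symmetric]) auto
  also have "\<dots> = (\<integral>\<^sup>+x. indicator {0<..<y} x * ?k x + indicator {y..<c * y} x * ?k x \<partial>lborel)"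
  proof (rule nn_integral_cong)
    fix x :: real
    have "x < y \<Longrightarrow> x < c * y"
      using c y by (smt (verit) mult_le_cancel_right1)
    then show "indicator {0<..<c * y} x * ?k x = indicator {0<..<y} x * ?k x + indicator {y..<c * y} x * ?k x"
      using y by (auto simp: indicator_def)
  qed
  also have "\<dots> = cosine_kernel_integral t y + (\<integral>\<^sup>+x. indicator {y..<c * y} x * ?k x \<partial>lborel)"
    unfolding cosine_kernel_integral_def by (rule nn_integral_add) auto
  also have "(\<integral>\<^sup>+x. indicator {y..<c * y} x * ?k x \<partial>lborel)
     = (\<integral>\<^sup>+v. indicator {y..<c * y} (y * v) * ennreal ((1 - cos (t * y * v)) / v) \<partial>lborel)"
    using y by (intro nn_integral_one_minus_cos_rescale) auto
  also have "\<dots> = (\<integral>\<^sup>+v. indicator {1..<c} v * ennreal ((1 - cos ((t * y) * v)) / v) \<partial>lborel)"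
    using y by (intro nn_integral_cong) (auto simp: indicator_def)
  also have "\<dots> = ennreal (cosine_log_integral c (t * y))"
    using c by (rule nn_integral_cosine_log_integral)
  finally show ?thesis .
qed

lemma borel_measurable_cosine_log_integral:
  assumes "1 \<le> c"
  shows "cosine_log_integral c \<in> borel_measurable borel"
proof -
  have "cosine_log_integral c
      = (\<lambda>z. enn2real (\<integral>\<^sup>+v. indicator {1..<c} v * ennreal ((1 - cos (z * v)) / v) \<partial>lborel))"
    using nn_integral_cosine_log_integral[OF assms] cosine_log_integral_nonneg by (simp add: fun_eq_iff)
  then show ?thesis
    by simp
qed

lemma borel_measurable_cosine_kernel_integral[measurable]:
  "cosine_kernel_integral t \<in> borel_measurable borel"
proof -
  have [measurable]: "Measurable.pred (borel \<Otimes>\<^sub>M borel) (\<lambda>p::real \<times> real. snd p \<in> {0<..<fst p})"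
    by (simp only: greaterThanLessThan_iff) measurable
  show ?thesis
    unfolding cosine_kernel_integral_def[abs_def] by measurable
qed

lemma tail_fun_nonneg: "0 \<le> tail_fun \<nu> x"
  by (simp add: tail_fun_def)

definition ou_decay :: "real measure \<Rightarrow> real \<Rightarrow> real" where
  "ou_decay \<nu> t = set_lebesgue_integral lborel {0<..} (\<lambda>x. (1 - cos (t * x)) * tail_fun \<nu> x / x)"

lemma ou_decay_abs: "ou_decay \<nu> \<bar>t\<bar> = ou_decay \<nu> t"
  by (cases "0 \<le> t") (simp_all add: ou_decay_def)

lemma ou_decay_nonneg: "0 \<le> ou_decay \<nu> t"
  unfolding ou_decay_def set_lebesgue_integral_def
  by (intro integral_nonneg_AE) (auto simp: tail_fun_nonneg indicator_def)

context
  fixes \<nu> :: "real measure"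
  assumes sets_\<nu>[measurable_cong]: "sets \<nu> = sets borel" and finite_\<nu>: "finite_measure \<nu>"
begin

interpretation finite_measure \<nu> by (rule finite_\<nu>)

lemma space_\<nu>: "space \<nu> = UNIV"
  using sets_eq_imp_space_eq[OF sets_\<nu>] by simp

lemma emeasure_greaterThan_eq_tail_fun: "emeasure \<nu> {x<..} = ennreal (tail_fun \<nu> x)"
  by (simp add: tail_fun_def emeasure_eq_measure sets_\<nu>)

lemma borel_measurable_tail_fun[measurable]: "tail_fun \<nu> \<in> borel_measurable borel"
proof -
  have "mono (\<lambda>x. - tail_fun \<nu> x)"
    unfolding mono_def tail_fun_def by (auto intro!: finite_measure_mono simp: sets_\<nu>)
  then have "(\<lambda>x. - (- tail_fun \<nu> x)) \<in> borel_measurable borel"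
    by (intro borel_measurable_uminus borel_measurable_mono)
  then show ?thesis by simp
qed

lemma borel_measurable_ou_decay: "ou_decay \<nu> \<in> borel_measurable borel"
  unfolding ou_decay_def[abs_def] set_lebesgue_integral_def by measurable

lemma AE_\<nu>_pos:
  assumes "emeasure \<nu> {..0} = 0"
  shows "AE y in \<nu>. 0 < y"
  using assms sets_\<nu> by (intro AE_I'[of "{..0}"]) (auto simp: null_sets_def space_\<nu>)

lemma measure_space_eq_measure_pos:
  assumes "emeasure \<nu> {..0} = 0"
  shows "measure \<nu> (space \<nu>) = measure \<nu> {0<..}"
proof -
  have "{..0} \<in> null_sets \<nu>"
    using assms sets_\<nu> by (simp add: null_sets_def)
  moreover have "space \<nu> = {0<..} \<union> {..0}"
    by (auto simp: space_\<nu>)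
  ultimately show ?thesis
    by (simp add: measure_Un_null_set sets_\<nu>)
qed

lemma nn_integral_tail_fun:
  fixes g :: "real \<Rightarrow> ennreal"
  assumes [measurable]: "g \<in> borel_measurable borel"
  shows "(\<integral>\<^sup>+x. indicator {0<..} x * g x * ennreal (tail_fun \<nu> x) \<partial>lborel)
     = (\<integral>\<^sup>+y. (\<integral>\<^sup>+x. indicator {0<..<y} x * g x \<partial>lborel) \<partial>\<nu>)"
proof -
  have [measurable]: "Measurable.pred (borel \<Otimes>\<^sub>M borel) (\<lambda>p::real \<times> real. snd p \<in> {fst p<..})"
    by (simp only: greaterThan_iff) measurable
  interpret pair_sigma_finite lborel \<nu> ..
  have "(\<integral>\<^sup>+x. indicator {0<..} x * g x * ennreal (tail_fun \<nu> x) \<partial>lborel)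
     = (\<integral>\<^sup>+x. (\<integral>\<^sup>+y. indicator {0<..} x * g x * indicator {x<..} y \<partial>\<nu>) \<partial>lborel)"
    by (intro nn_integral_cong)
      (simp add: nn_integral_cmult sets_\<nu> emeasure_greaterThan_eq_tail_fun[symmetric])
  also have "\<dots> = (\<integral>\<^sup>+y. (\<integral>\<^sup>+x. indicator {0<..} x * g x * indicator {x<..} y \<partial>lborel) \<partial>\<nu>)"
    by (rule Fubini'[symmetric]) measurable
  also have "\<dots> = (\<integral>\<^sup>+y. (\<integral>\<^sup>+x. indicator {0<..<y} x * g x \<partial>lborel) \<partial>\<nu>)"
    by (intro nn_integral_cong) (auto simp: indicator_def)
  finally show ?thesis .
qed

context
  assumes log_moment: "set_integrable \<nu> {2<..} (\<lambda>x. ln x)"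
begin

lemma nn_integral_tail_fun_finite:
  fixes g :: "real \<Rightarrow> real"
  assumes [measurable]: "g \<in> borel_measurable borel"
    and g: "\<And>x. 0 < x \<Longrightarrow> g x \<le> A \<and> g x \<le> B / x" and A: "0 \<le> A" and B: "0 \<le> B"
  shows "(\<integral>\<^sup>+x. indicator {0<..} x * ennreal (g x) * ennreal (tail_fun \<nu> x) \<partial>lborel) < \<infinity>"
proof -
  define h where "h y = A + B * ln 2 + B * (indicator {2<..} y * ln y)" for y
  have "integrable \<nu> (\<lambda>y. indicator {2<..} y * ln y)"
    using log_moment by (simp add: set_integrable_def)
  then have "integrable \<nu> h"
    unfolding h_def by (intro Bochner_Integration.integrable_add integrable_const integrable_mult_right)
  then have h_finite: "(\<integral>\<^sup>+y. ennreal (h y) \<partial>\<nu>) < \<infinity>"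
    using integrableD(2) by (simp add: less_top)
  have inner_le: "(\<integral>\<^sup>+x. indicator {0<..<y} x * ennreal (g x) \<partial>lborel) \<le> ennreal (h y)" for y
  proof -
    have "ln (max 1 y) \<le> ln 2 + indicator {2<..} y * ln y"
      by (cases "y \<le> 2") (auto simp: indicator_def max_def)
    from mult_left_mono[OF this B] have "A + B * ln (max 1 y) \<le> h y"
      unfolding h_def by (simp add: distrib_left)
    moreover have "(\<integral>\<^sup>+x. indicator {0<..<y} x * ennreal (g x) \<partial>lborel) \<le> ennreal (A + B * ln (max 1 y))"
      by (rule nn_integral_Ioo_le_ln) (use g A B in auto)
    ultimately show ?thesis
      using ennreal_leI order_trans by blast
  qed
  have "(\<integral>\<^sup>+y. (\<integral>\<^sup>+x. indicator {0<..<y} x * ennreal (g x) \<partial>lborel) \<partial>\<nu>) < \<infinity>"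
    using order.strict_trans1[OF nn_integral_mono[OF inner_le] h_finite] .
  then show ?thesis
    by (simp add: nn_integral_tail_fun)
qed

lemma nn_integral_ou_decay_finite:
  "(\<integral>\<^sup>+x. indicator {0<..} x * ennreal ((1 - cos (t * x)) / x) * ennreal (tail_fun \<nu> x) \<partial>lborel) < \<infinity>"
proof (rule nn_integral_tail_fun_finite)
  fix x :: real assume x: "0 < x"
  have "1 - cos (t * x) \<le> \<bar>t\<bar> * x" "1 - cos (t * x) \<le> 2"
    using one_minus_cos_le_norm_iexp[of "t * x"] norm_iexp_minus_one_le_abs[of "t * x"]
      norm_iexp_minus_one_le_2[of "t * x"] x by (auto simp: abs_mult)
  then show "(1 - cos (t * x)) / x \<le> \<bar>t\<bar> \<and> (1 - cos (t * x)) / x \<le> 2 / x"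
    using x by (auto simp: divide_le_eq divide_right_mono)
qed auto

lemma set_integrable_ou_exponent:
  "set_integrable lborel {0<..} (\<lambda>x. (iexp (t * x) - 1) * complex_of_real (tail_fun \<nu> x / x))"
  unfolding set_integrable_def
proof (rule integrableI_bounded)
  have "(\<integral>\<^sup>+x. ennreal (norm (indicator {0<..} x *\<^sub>R ((iexp (t * x) - 1) * complex_of_real (tail_fun \<nu> x / x)))) \<partial>lborel)
     = (\<integral>\<^sup>+x. indicator {0<..} x * ennreal (cmod (iexp (t * x) - 1) / x) * ennreal (tail_fun \<nu> x) \<partial>lborel)"
    by (intro nn_integral_cong) (auto simp: indicator_def norm_mult norm_divide tail_fun_nonneg ennreal_mult[symmetric])
  also have "\<dots> < \<infinity>"
  proof (rule nn_integral_tail_fun_finite)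
    fix x :: real assume x: "0 < x"
    show "cmod (iexp (t * x) - 1) / x \<le> \<bar>t\<bar> \<and> cmod (iexp (t * x) - 1) / x \<le> 2 / x"
      using norm_iexp_minus_one_le_abs[of "t * x"] norm_iexp_minus_one_le_2[of "t * x"] x
      by (auto simp: divide_le_eq divide_right_mono abs_mult)
  qed auto
  finally show "(\<integral>\<^sup>+x. ennreal (norm (indicator {0<..} x *\<^sub>R ((iexp (t * x) - 1) * complex_of_real (tail_fun \<nu> x / x)))) \<partial>lborel) < \<infinity>" .
qed measurable

lemma norm_ou_charfun: "cmod (ou_charfun \<nu> t) = exp (- ou_decay \<nu> t)"
proof -
  let ?f = "\<lambda>x. (iexp (t * x) - 1) * complex_of_real (tail_fun \<nu> x / x)"
  have "Re (set_lebesgue_integral lborel {0<..} ?f) = set_lebesgue_integral lborel {0<..} (\<lambda>x. Re (?f x))"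
    using set_integrable_ou_exponent[of t] unfolding set_integrable_def set_lebesgue_integral_def
    by (subst integral_Re[symmetric]) (auto intro!: Bochner_Integration.integral_cong simp: indicator_def)
  also have "\<dots> = - ou_decay \<nu> t"
    unfolding ou_decay_def set_lebesgue_integral_def
    by (subst integral_minus[symmetric], intro Bochner_Integration.integral_cong) (auto simp: Re_exp indicator_def field_simps)
  finally show ?thesis
    unfolding ou_charfun_def by simp
qed

lemma ennreal_ou_decay:
  "ennreal (ou_decay \<nu> t) = (\<integral>\<^sup>+x. indicator {0<..} x * ennreal ((1 - cos (t * x)) / x) * ennreal (tail_fun \<nu> x) \<partial>lborel)"
proof -
  have "(\<integral>\<^sup>+x. ennreal (indicator {0<..} x *\<^sub>R ((1 - cos (t * x)) * tail_fun \<nu> x / x)) \<partial>lborel)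
     = (\<integral>\<^sup>+x. indicator {0<..} x * ennreal ((1 - cos (t * x)) / x) * ennreal (tail_fun \<nu> x) \<partial>lborel)"
    by (intro nn_integral_cong) (auto simp: indicator_def tail_fun_nonneg ennreal_mult[symmetric])
  moreover have "ou_decay \<nu> t = enn2real (\<integral>\<^sup>+x. ennreal (indicator {0<..} x *\<^sub>R ((1 - cos (t * x)) * tail_fun \<nu> x / x)) \<partial>lborel)"
    unfolding ou_decay_def set_lebesgue_integral_def
    by (rule integral_eq_nn_integral) (auto simp: tail_fun_nonneg indicator_def)
  ultimately show ?thesis
    using nn_integral_ou_decay_finite[of t] by simp
qed

lemma ennreal_ou_decay_eq_cosine_kernel: "ennreal (ou_decay \<nu> t) = (\<integral>\<^sup>+y. cosine_kernel_integral t y \<partial>\<nu>)"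
  unfolding ennreal_ou_decay cosine_kernel_integral_def by (rule nn_integral_tail_fun) measurable

context
  assumes nonpositive_null: "emeasure \<nu> {..0} = 0"
begin

lemma ou_decay_scale:
  assumes c: "1 \<le> c"
  shows "ou_decay \<nu> (c * t) = ou_decay \<nu> t + (\<integral>y. cosine_log_integral c (t * y) \<partial>\<nu>)"
proof -
  have [measurable]: "(\<lambda>y. cosine_log_integral c (t * y)) \<in> borel_measurable \<nu>"
    using borel_measurable_cosine_log_integral[OF c] by measurable
  have "ennreal (ou_decay \<nu> (c * t)) = (\<integral>\<^sup>+y. cosine_kernel_integral (c * t) y \<partial>\<nu>)"
    by (rule ennreal_ou_decay_eq_cosine_kernel)
  also have "\<dots> = (\<integral>\<^sup>+y. cosine_kernel_integral t y + ennreal (cosine_log_integral c (t * y)) \<partial>\<nu>)"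
    using AE_\<nu>_pos[OF nonpositive_null] by (intro nn_integral_cong_AE) (auto simp: cosine_kernel_integral_scale c)
  also have "\<dots> = ennreal (ou_decay \<nu> t) + ennreal (\<integral>y. cosine_log_integral c (t * y) \<partial>\<nu>)"
    unfolding ennreal_ou_decay_eq_cosine_kernel
    by (subst nn_integral_add)
      (auto intro!: nn_integral_eq_integral integrable_const_bound[where B = "2 * ln c"]
        simp: cosine_log_integral_nonneg cosine_log_integral_le c)
  also have "\<dots> = ennreal (ou_decay \<nu> t + (\<integral>y. cosine_log_integral c (t * y) \<partial>\<nu>))"
    by (simp add: ou_decay_nonneg cosine_log_integral_nonneg)
  finally show ?thesis
    by (subst (asm) ennreal_inj)
      (auto intro!: add_nonneg_nonneg integral_nonneg_AE simp: ou_decay_nonneg cosine_log_integral_nonneg)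
qed

lemma tendsto_ou_decay_scale:
  assumes c: "1 \<le> c"
  shows "((\<lambda>t. ou_decay \<nu> (c * t) - ou_decay \<nu> t) \<longlongrightarrow> measure \<nu> (space \<nu>) * ln c) at_top"
proof -
  have [measurable]: "cosine_log_integral c \<in> borel_measurable borel"
    using c by (rule borel_measurable_cosine_log_integral)
  have "((\<lambda>t. \<integral>y. cosine_log_integral c (t * y) \<partial>\<nu>) \<longlongrightarrow> (\<integral>y. ln c \<partial>\<nu>)) at_top"
  proof (rule integral_dominated_convergence_at_top[where w = "\<lambda>y. 2 * ln c"])
    show "AE y in \<nu>. ((\<lambda>t. cosine_log_integral c (t * y)) \<longlongrightarrow> ln c) at_top"
      using AE_\<nu>_pos[OF nonpositive_null]
    proof eventually_elim
      fix y :: real assume "0 < y"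
      then have "filterlim (\<lambda>t. t * y) at_top at_top"
        by (intro filterlim_at_top_mult_tendsto_pos[OF tendsto_const] filterlim_ident)
      then show "((\<lambda>t. cosine_log_integral c (t * y)) \<longlongrightarrow> ln c) at_top"
        by (rule filterlim_compose[OF tendsto_cosine_log_integral[OF c]])
    qed
    show "\<forall>\<^sub>F t in at_top. AE y in \<nu>. norm (cosine_log_integral c (t * y)) \<le> 2 * ln c"
      using c by (simp add: cosine_log_integral_nonneg cosine_log_integral_le)
  qed simp_all
  moreover have "(\<lambda>t. ou_decay \<nu> (c * t) - ou_decay \<nu> t) = (\<lambda>t. \<integral>y. cosine_log_integral c (t * y) \<partial>\<nu>)"
    by (simp add: ou_decay_scale[OF c] fun_eq_iff)
  ultimately show ?thesis
    by simp
qed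

lemma tendsto_ou_decay_ratio:
  assumes x: "0 < x"
  shows "((\<lambda>t. ou_decay \<nu> (t * x) - ou_decay \<nu> t) \<longlongrightarrow> measure \<nu> (space \<nu>) * ln x) at_top"
proof (cases "1 \<le> x")
  case True
  then show ?thesis
    using tendsto_ou_decay_scale[of x] by (simp add: mult.commute)
next
  case False
  with x have "1 \<le> 1 / x" by simp
  moreover have "filterlim (\<lambda>t. t * x) at_top at_top"
    using x by (intro filterlim_at_top_mult_tendsto_pos[OF tendsto_const] filterlim_ident)
  ultimately have "((\<lambda>t. ou_decay \<nu> (1 / x * (t * x)) - ou_decay \<nu> (t * x))
      \<longlongrightarrow> measure \<nu> (space \<nu>) * ln (1 / x)) at_top"
    by (rule filterlim_compose[OF tendsto_ou_decay_scale])
  then have "((\<lambda>t. - (ou_decay \<nu> t - ou_decay \<nu> (t * x))) \<longlongrightarrow> - (measure \<nu> (space \<nu>) * ln (1 / x))) at_top"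
    using x by (intro tendsto_minus) simp
  then show ?thesis
    using x by (simp add: ln_div)
qed

end

end

end

theorem mainTheorem6:
  fixes \<nu> :: "real measure" and \<alpha> :: real
  assumes "sets \<nu> = sets borel"
    and "finite_measure \<nu>"
    and "emeasure \<nu> {..0} = 0"
    and "set_integrable \<nu> {2<..} (\<lambda>x. ln x)"
    and "\<alpha> = measure \<nu> {0<..}"
    and "2 < \<alpha>"
  shows "\<exists>L B. slowly_varying_at_top L \<and> 0 < B \<and>
           ((\<lambda>t. \<bar>t\<bar> powr \<alpha> * cmod (ou_charfun \<nu> t) / L \<bar>t\<bar>) \<longlongrightarrow> B) at_infinity"
proof -
  define L where "L s = s powr \<alpha> * exp (- ou_decay \<nu> s)" for s
  have "slowly_varying_at_top L"
    unfolding L_def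
  proof (rule slowly_varying_at_top_powr_exp)
    show "ou_decay \<nu> \<in> borel_measurable borel"
      using assms(1,2) by (rule borel_measurable_ou_decay)
    show "((\<lambda>t. ou_decay \<nu> (t * x) - ou_decay \<nu> t) \<longlongrightarrow> \<alpha> * ln x) at_top" if "0 < x" for x
      using tendsto_ou_decay_ratio[OF assms(1,2,4,3) that] measure_space_eq_measure_pos[OF assms(1,2,3)] assms(5)
      by simp
  qed
  moreover have "\<forall>\<^sub>F t in at_infinity. \<bar>t\<bar> powr \<alpha> * cmod (ou_charfun \<nu> t) / L \<bar>t\<bar> = 1"
    unfolding eventually_at_infinity
    by (rule exI[of _ 1]) (auto simp: L_def norm_ou_charfun[OF assms(1,2,4)] ou_decay_abs)
  ultimately show ?thesis
    by (intro exI[of _ L] exI[of _ 1]) (auto intro: tendsto_eventually)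
qed

end
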